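(* Let $\sqrt{2} = (1.b_1 b_2 b_3 \cdots)_2$ be the binary expansion of $\sqrt 2$ and $b = b_1 b_2 b_3 \cdots$ the infinite binary word of its fractional digits. For integers $n \geq 2$, let $L_n(x) = \left\lfloor \frac{x(2^n - x)}{2^{n-2}} \right\rfloor$ for $x \in X_n = \{1, 2, \dots, 2^n - 1\}$, and call $n$ undesirable if there exists $x \in X_n$ with $L_n(x) = 2^{n-1}$. Let $d_N$ be the number of undesirable parameters $n$ with $2 \le n \leq N$. Then $$\liminf_{N \to \infty} \frac{d_N}{N} \geq \frac{5 r_{\inf}(b) - 2}{3} \quad\text{and}\quad \limsup_{N \to \infty} \frac{d_N}{N} \geq \frac{5 r_{\sup}(b) - 2}{3},$$ where $r_{\inf}(b) = \liminf_{n\to\infty} |Z(b^{(n)})|/n$ and $r_{\sup}(b) = \limsup_{n\to\infty} |Z(b^{(n)})|/n$. In particular, if $r_{\sup}(b) > 2/5$, then there are infinitely many undesirable parameters.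
   Context: For a binary word $w = w_1 w_2 \cdots$, $w^{(n)}$ denotes its initial subword of length $n$, and $Z(w)$ is the set of indices $i$ with $w_i = 0$; thus $|Z(b^{(n)})|$ is the number of zeros among $b_1, \dots, b_n$. *)

theory Defs
  imports Complex_Main "HOL-Library.Liminf_Limsup" "HOL-Library.Extended_Real"
begin

text \<open>i-th binary digit (i \<ge> 1) after the binary point of sqrt 2: b_i.\<close>
definition sqrt2_digit :: "nat \<Rightarrow> nat" where
  "sqrt2_digit i = nat \<lfloor>sqrt 2 * 2 ^ i\<rfloor> mod 2"

definition zeros_count :: "nat \<Rightarrow> nat" where
  "zeros_count n = card {i \<in> {1..n}. sqrt2_digit i = 0}"

definition L_fun :: "nat \<Rightarrow> nat \<Rightarrow> int" where
  "L_fun n x = \<lfloor>real x * (2 ^ n - real x) / 2 ^ (n - 2)\<rfloor>"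

definition undesirable :: "nat \<Rightarrow> bool" where
  "undesirable n \<longleftrightarrow> n \<ge> 2 \<and> (\<exists>x \<in> {1..2 ^ n - 1}. L_fun n x = 2 ^ (n - 1))"

definition d_count :: "nat \<Rightarrow> nat" where
  "d_count N = card {n \<in> {2..N}. undesirable n}"

definition r_inf :: ereal where
  "r_inf = liminf (\<lambda>n. ereal (real (zeros_count n) / real n))"

definition r_sup :: ereal where
  "r_sup = limsup (\<lambda>n. ereal (real (zeros_count n) / real n))"

end

theory Submission
  imports Defs "HOL-Analysis.Extended_Real_Limits"
begin

text \<open>Let \<open>f k = frac (sqrt 2 * 2^k)\<close>, the number with binary expansion \<open>0.b\<^sub>k\<^sub>+\<^sub>1 b\<^sub>k\<^sub>+\<^sub>2 \<dots>\<close>.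
  For \<open>P = 2^k\<close>, \<open>s = \<lfloor>sqrt 2 * P\<rfloor>\<close> and \<open>x = 2P - s\<close> one has \<open>L (k + 2) x = \<lfloor>4P - s^2 / P\<rfloor>\<close>,
  which equals \<open>2P\<close> as soon as \<open>2P^2 - s^2 < P\<close>; this holds whenever \<open>f k < sqrt 2 / 4\<close>.
  A zero digit \<open>b\<^sub>k\<^sub>+\<^sub>1\<close> followed by 0, 100 or 1010 (a good zero) forces \<open>f k < 11/32 < sqrt 2 / 4\<close>,
  so \<open>k + 2\<close> is undesirable. Every other zero starts 011 or 01011; discharging three units from
  each of them onto the following ones, no one receiving more than two, shows that there are
  at most \<open>2/3\<close> as many such zeros as ones. Hence \<open>5 |Z(b\<^sup>(\<^sup>N\<^sup>))| \<le> 3 d\<^sub>N + 2N + O(1)\<close>, and dividing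
  by \<open>N\<close> gives both bounds.\<close>

lemma sum_shift_le: "(\<Sum>i<M. f (i + k)) \<le> (\<Sum>i<M + k. f i)"
  for f :: "nat \<Rightarrow> nat"
proof -
  have "(\<Sum>i<M. f (i + k)) = (\<Sum>i\<in>{k..<M + k}. f i)"
    using sum.shift_bounds_nat_ivl[of f 0 k M] by (simp add: atLeast0LessThan)
  also have "\<dots> \<le> (\<Sum>i<M + k. f i)" by (rule sum_mono2) auto
  finally show ?thesis .
qed

lemma sum_le_shift:
  fixes f :: "nat \<Rightarrow> nat"
  assumes "\<And>i. f i \<le> c"
  shows "(\<Sum>i<M. f i) \<le> k * c + (\<Sum>i<M. f (i + k))"
proof -
  have "(\<Sum>i<M. f i) \<le> (\<Sum>i<M + k. f i)" by (rule sum_mono2) auto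
  also have "\<dots> = (\<Sum>i<k. f i) + (\<Sum>i<M. f (i + k))"
    using sum.atLeastLessThan_concat[of 0 k "M + k" f] sum.shift_bounds_nat_ivl[of f 0 k M]
    by (simp add: atLeast0LessThan)
  also have "(\<Sum>i<k. f i) \<le> k * c" using sum_bounded_above[of "{..<k}" f c] assms by simp
  finally show ?thesis by simp
qed

fun occurs_at :: "nat list \<Rightarrow> (nat \<Rightarrow> nat) \<Rightarrow> nat \<Rightarrow> bool" where
  "occurs_at [] b i \<longleftrightarrow> True"
| "occurs_at (x # w) b i \<longleftrightarrow> b i = x \<and> occurs_at w b (Suc i)"

definition good_zero :: "(nat \<Rightarrow> nat) \<Rightarrow> nat \<Rightarrow> bool" where
  "good_zero b i \<longleftrightarrow> occurs_at [0, 0] b i \<or> occurs_at [0, 1, 0, 0] b i \<or> occurs_at [0, 1, 0, 1, 0] b i"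

definition bad_zero :: "(nat \<Rightarrow> nat) \<Rightarrow> nat \<Rightarrow> bool" where
  "bad_zero b i \<longleftrightarrow> occurs_at [0, 1, 1] b i \<or> occurs_at [0, 1, 0, 1, 1] b i"

lemma good_zero_iff:
  assumes bits: "\<And>i. b i = 0 \<or> b i = 1"
  shows "good_zero b i \<longleftrightarrow> b i = 0 \<and> \<not> bad_zero b i"
  using bits[of "Suc i"] bits[of "Suc (Suc i)"] bits[of "Suc (Suc (Suc i))"]
    bits[of "Suc (Suc (Suc (Suc i)))"]
  unfolding good_zero_def bad_zero_def by (elim disjE) auto

text \<open>Discharging: a bad zero at \<open>j\<close> sends two units to the one at \<open>j + 1\<close> and a third
  unit to the one at \<open>j + 2\<close> (pattern 011) or \<open>j + 4\<close> (pattern 01011). No one receives more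
  than two units.\<close>

lemma bad_zero_charge:
  "2 * of_bool (bad_zero b (m + 3)) + of_bool (occurs_at [0, 1, 1] b (m + 2))
      + of_bool (occurs_at [0, 1, 0, 1, 1] b m) \<le> (2 * of_bool (b (m + 4) = 1) :: nat)"
proof -
  have "b (m + 3) = 0 \<and> b (m + 4) = 1" if "bad_zero b (m + 3)"
    using that by (auto simp: bad_zero_def numeral_eq_Suc)
  moreover have "b (m + 3) = 1 \<and> b (m + 4) = 1" if "occurs_at [0, 1, 1] b (m + 2)"
    using that by (simp add: numeral_eq_Suc)
  moreover have "b (m + 3) = 1 \<and> b (m + 4) = 1" if "occurs_at [0, 1, 0, 1, 1] b m"
    using that by (simp add: numeral_eq_Suc)
  ultimately show ?thesis by (cases "bad_zero b (m + 3)") (auto simp del: occurs_at.simps)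
qed

lemma bad_zeros_le_ones:
  "3 * (\<Sum>i<M. of_bool (bad_zero b i)) \<le> 8 + 2 * (\<Sum>i<M + 4. of_bool (b i = 1) :: nat)"
proof -
  define bad where "bad i = (of_bool (bad_zero b i) :: nat)" for i
  define A where "A i = (of_bool (occurs_at [0, 1, 1] b i) :: nat)" for i
  define B where "B i = (of_bool (occurs_at [0, 1, 0, 1, 1] b i) :: nat)" for i
  have "bad i = A i + B i" for i
    by (auto simp: bad_def A_def B_def bad_zero_def)
  then have "3 * (\<Sum>i<M. bad i) = 2 * (\<Sum>i<M. bad i) + (\<Sum>i<M. A i) + (\<Sum>i<M. B i)"
    by (simp add: sum.distrib)
  also have "\<dots> \<le> (6 + 2 * (\<Sum>i<M. bad (i + 3))) + (2 + (\<Sum>i<M. A (i + 2))) + (\<Sum>i<M. B i)"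
  proof -
    have "bad i \<le> 1" "A i \<le> 1" for i by (simp_all add: bad_def A_def)
    then show ?thesis using sum_le_shift[of bad 1 M 3] sum_le_shift[of A 1 M 2] by simp
  qed
  also have "\<dots> = 8 + (\<Sum>i<M. 2 * bad (i + 3) + A (i + 2) + B i)"
    by (simp add: sum.distrib sum_distrib_left)
  also have "(\<Sum>i<M. 2 * bad (i + 3) + A (i + 2) + B i) \<le> (\<Sum>i<M. 2 * of_bool (b (i + 4) = 1))"
    unfolding bad_def A_def B_def by (intro sum_mono bad_zero_charge)
  also have "\<dots> = 2 * (\<Sum>i<M. of_bool (b (i + 4) = 1))"
    by (simp only: sum_distrib_left)
  also have "\<dots> \<le> 2 * (\<Sum>i<M + 4. of_bool (b i = 1))"
    by (intro mult_left_mono sum_shift_le) simp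
  finally show ?thesis by (simp only: bad_def)
qed

lemma zeros_le_good_zeros:
  assumes bits: "\<And>i. b i = 0 \<or> b i = 1"
  shows "5 * (\<Sum>i<M. of_bool (b i = 0)) \<le> 3 * (\<Sum>i<M. of_bool (good_zero b i)) + 2 * M + (16 :: nat)"
proof -
  define Z where "Z K = (\<Sum>i<K. of_bool (b i = 0) :: nat)" for K
  define Ones where "Ones = (\<Sum>i<M + 4. of_bool (b i = 1) :: nat)"
  define G where "G = (\<Sum>i<M. of_bool (good_zero b i) :: nat)"
  define B where "B = (\<Sum>i<M. of_bool (bad_zero b i) :: nat)"
  have "Z M = G + B"
  proof -
    have "of_bool (b i = 0) = of_bool (good_zero b i) + (of_bool (bad_zero b i) :: nat)" for i
      using good_zero_iff[of b i, OF bits] by (auto simp: bad_zero_def)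
    then show ?thesis unfolding Z_def G_def B_def by (simp only: sum.distrib)
  qed
  moreover have "3 * B \<le> 8 + 2 * Ones"
    unfolding B_def Ones_def by (rule bad_zeros_le_ones)
  moreover have "Ones + Z (M + 4) = M + 4"
  proof -
    have "of_bool (b i = 1) + of_bool (b i = 0) = (1 :: nat)" for i
      using bits[of i] by auto
    then have "Ones + Z (M + 4) = (\<Sum>i<M + 4. 1 :: nat)"
      unfolding Ones_def Z_def sum.distrib[symmetric] by simp
    then show ?thesis by simp
  qed
  moreover have "Z M \<le> Z (M + 4)"
    unfolding Z_def by (rule sum_mono2) auto
  ultimately have "5 * Z M \<le> 3 * G + 2 * M + 16" by linarith
  then show ?thesis by (simp only: Z_def G_def)
qed

lemma binary_tail_lt_of_good_zero:
  fixes g :: "nat \<Rightarrow> real"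
  assumes tail: "\<And>j. g j = (real (b (Suc j)) + g (Suc j)) / 2"
    and range: "\<And>j. 0 \<le> g j \<and> g j < 1"
    and "good_zero b (Suc k)"
  shows "g k < 11 / 32"
  \<comment> \<open>the three patterns give the bounds 1/4, 5/16 and 11/32\<close>
  using \<open>good_zero b (Suc k)\<close> tail[of k] tail[of "k + 1"] tail[of "k + 2"] tail[of "k + 3"]
    tail[of "k + 4"] range[of "k + 2"] range[of "k + 4"] range[of "k + 5"]
  unfolding good_zero_def by (auto simp: numeral_eq_Suc)

lemma frac_double: "frac x = (of_int (\<lfloor>2 * x\<rfloor> mod 2) + frac (2 * x)) / 2"
  for x :: real
proof -
  have "\<lfloor>2 * x\<rfloor> = 2 * \<lfloor>x\<rfloor> + (if frac x < 1/2 then 0 else 1)"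
    using frac_lt_1[of x] frac_ge_0[of x]
    by (intro floor_unique) (auto simp: frac_def)
  then show ?thesis
    by (auto simp: frac_def)
qed

definition sqrt2_frac :: "nat \<Rightarrow> real" where
  "sqrt2_frac k = frac (sqrt 2 * 2 ^ k)"

lemma sqrt2_frac_digit: "sqrt2_frac k = (real (sqrt2_digit (Suc k)) + sqrt2_frac (Suc k)) / 2"
proof -
  define x where "x = sqrt 2 * 2 ^ k"
  have "\<lfloor>2 * x\<rfloor> \<ge> 0" by (simp add: x_def)
  then have "real (sqrt2_digit (Suc k)) = of_int (\<lfloor>2 * x\<rfloor> mod 2)"
    by (simp add: sqrt2_digit_def x_def nat_mod_distrib mult.commute mult.left_commute flip: of_nat_nat)
  then show ?thesis
    using frac_double[of x] by (simp add: sqrt2_frac_def x_def mult.commute mult.left_commute)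
qed

lemma sqrt2_digit_cases: "sqrt2_digit i = 0 \<or> sqrt2_digit i = 1"
proof -
  have "sqrt2_digit i < 2" by (simp add: sqrt2_digit_def)
  then show ?thesis by linarith
qed

lemma sqrt2_digit_0: "sqrt2_digit 0 = 1"
proof -
  have "\<lfloor>sqrt 2\<rfloor> = 1" by (intro floor_unique) (auto simp: sqrt2_less_2)
  then show ?thesis by (simp add: sqrt2_digit_def)
qed

lemma sqrt2_frac_small_imp_undesirable:
  assumes small: "sqrt2_frac k < sqrt 2 / 4"
  shows "undesirable (k + 2)"
proof -
  define P :: real where "P = 2 ^ k"
  define t where "t = sqrt 2 * P"
  define s where "s = \<lfloor>t\<rfloor>"
  have "P > 0" by (simp add: P_def)
  have t_sq: "t\<^sup>2 = 2 * P\<^sup>2" by (simp add: t_def power_mult_distrib)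
  have "0 \<le> s" by (simp add: s_def t_def P_def)
  have "s \<le> t" by (simp add: s_def)
  have "s < 2 * 2 ^ k"
  proof -
    have "t < 2 * P" using sqrt2_less_2 \<open>P > 0\<close> by (simp add: t_def)
    then show ?thesis by (simp add: s_def floor_less_iff P_def)
  qed
  have s_sq_le: "s\<^sup>2 \<le> t\<^sup>2" using \<open>0 \<le> s\<close> \<open>s \<le> t\<close> by (simp add: power_mono)
  have s_sq_gt: "t\<^sup>2 - P < s\<^sup>2"
  proof -
    have "t\<^sup>2 - s\<^sup>2 = (t - s) * (t + s)" by (simp add: power2_eq_square algebra_simps)
    also have "\<dots> \<le> (t - s) * (2 * t)" using \<open>s \<le> t\<close> by (intro mult_left_mono) auto
    also have "\<dots> = 2 * sqrt 2 * P * sqrt2_frac k"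
      by (simp add: sqrt2_frac_def frac_def s_def t_def P_def)
    also have "\<dots> < 2 * sqrt 2 * P * (sqrt 2 / 4)"
      using small \<open>P > 0\<close> by (intro mult_strict_left_mono) auto
    also have "\<dots> = P" by simp
    finally show ?thesis by simp
  qed
  define x where "x = nat (2 * 2 ^ k - s)"
  have x_real: "real x = 2 * P - s" using \<open>s < 2 * 2 ^ k\<close> by (simp add: x_def P_def)
  have "x \<in> {1..2 ^ (k + 2) - 1}"
    using \<open>0 \<le> s\<close> \<open>s < 2 * 2 ^ k\<close> by (auto simp: x_def nat_le_iff power_add)
  moreover have "L_fun (k + 2) x = 2 ^ (k + 2 - 1)"
  proof -
    have "L_fun (k + 2) x = \<lfloor>4 * P - s\<^sup>2 / P\<rfloor>"
      using \<open>P > 0\<close> by (simp add: L_fun_def x_real P_def power_add field_simps power2_eq_square)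
    also have "\<dots> = 2 * 2 ^ k"
      using s_sq_le s_sq_gt \<open>P > 0\<close> unfolding t_sq
      by (intro floor_unique) (auto simp: P_def field_simps power2_eq_square)
    finally show ?thesis by simp
  qed
  ultimately show ?thesis by (auto simp: undesirable_def)
qed

lemma sqrt2_good_zero_imp_undesirable:
  assumes "good_zero sqrt2_digit i"
  shows "undesirable (Suc i)"
proof -
  obtain k where k: "i = Suc k"
    using assms sqrt2_digit_0 by (cases i) (auto simp: good_zero_def)
  have "sqrt2_frac k < 11 / 32"
    using assms unfolding k
    by (intro binary_tail_lt_of_good_zero[where b = sqrt2_digit] sqrt2_frac_digit)
      (simp_all add: sqrt2_frac_def frac_lt_1)
  also have "11 / 32 < sqrt 2 / 4"
    using real_less_rsqrt[of "11 / 8" 2] by (simp add: power2_eq_square)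
  finally show ?thesis
    using sqrt2_frac_small_imp_undesirable k by simp
qed

lemma zeros_count_le_d_count: "5 * zeros_count N \<le> 3 * d_count N + 2 * N + 21"
proof -
  define Z where "Z K = (\<Sum>i<K. of_bool (sqrt2_digit i = 0) :: nat)" for K
  define G where "G = (\<Sum>i<N. of_bool (good_zero sqrt2_digit i) :: nat)"
  have "zeros_count N \<le> card (insert N ({..<N} \<inter> {i. sqrt2_digit i = 0}))"
    unfolding zeros_count_def by (intro card_mono) auto
  also have "\<dots> \<le> Z N + 1"
    by (simp add: Z_def card_insert_if)
  finally have "5 * zeros_count N \<le> 5 * Z N + 5" by simp
  also have "5 * Z N \<le> 3 * G + 2 * N + 16"
    unfolding Z_def G_def by (rule zeros_le_good_zeros) (rule sqrt2_digit_cases)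
  also have "G \<le> d_count N"
  proof -
    have "G = card (Suc ` ({..<N} \<inter> {i. good_zero sqrt2_digit i}))"
      by (simp add: G_def card_image)
    also have "\<dots> \<le> d_count N"
      unfolding d_count_def using sqrt2_good_zero_imp_undesirable
      by (intro card_mono) (auto simp: undesirable_def)
    finally show ?thesis .
  qed
  finally show ?thesis by simp
qed

lemma liminf_ge_affine:
  fixes X Y e :: "nat \<Rightarrow> real"
  assumes "0 \<le> a" and "e \<longlonglongrightarrow> 0"
    and "eventually (\<lambda>N. a * Y N + c - e N \<le> X N) sequentially"
  shows "ereal a * liminf (\<lambda>N. ereal (Y N)) + ereal c \<le> liminf (\<lambda>N. ereal (X N))"
proof -
  have "(\<lambda>N. ereal (- e N)) \<longlonglongrightarrow> 0"
    using tendsto_minus[OF assms(2)] by (simp add: zero_ereal_def)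
  then have "liminf (\<lambda>N. ereal (- e N) + (ereal a * ereal (Y N) + ereal c))
      = liminf (\<lambda>N. ereal a * ereal (Y N) + ereal c)"
    by (subst ereal_liminf_lim_add) auto
  also have "\<dots> = liminf (\<lambda>N. ereal a * ereal (Y N)) + ereal c"
    by (rule Liminf_add_ereal_right) auto
  also have "liminf (\<lambda>N. ereal a * ereal (Y N)) = ereal a * liminf (\<lambda>N. ereal (Y N))"
    using assms(1) by (rule Liminf_ereal_mult_left[OF sequentially_bot])
  finally have "liminf (\<lambda>N. ereal (- e N) + (ereal a * ereal (Y N) + ereal c))
      = ereal a * liminf (\<lambda>N. ereal (Y N)) + ereal c" .
  moreover have "liminf (\<lambda>N. ereal (- e N) + (ereal a * ereal (Y N) + ereal c))
      \<le> liminf (\<lambda>N. ereal (X N))"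
    using assms(3) by (intro Liminf_mono) (auto elim!: eventually_mono)
  ultimately show ?thesis by simp
qed

lemma limsup_ge_affine:
  fixes X Y e :: "nat \<Rightarrow> real"
  assumes "0 \<le> a" and "e \<longlonglongrightarrow> 0"
    and "eventually (\<lambda>N. a * Y N + c - e N \<le> X N) sequentially"
  shows "ereal a * limsup (\<lambda>N. ereal (Y N)) + ereal c \<le> limsup (\<lambda>N. ereal (X N))"
proof -
  have "(\<lambda>N. ereal (- e N)) \<longlonglongrightarrow> 0"
    using tendsto_minus[OF assms(2)] by (simp add: zero_ereal_def)
  then have "limsup (\<lambda>N. ereal (- e N) + (ereal a * ereal (Y N) + ereal c))
      = limsup (\<lambda>N. ereal a * ereal (Y N) + ereal c)"
    by (subst ereal_limsup_lim_add) auto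
  also have "\<dots> = limsup (\<lambda>N. ereal a * ereal (Y N)) + ereal c"
    by (rule Limsup_add_ereal_right) auto
  also have "limsup (\<lambda>N. ereal a * ereal (Y N)) = ereal a * limsup (\<lambda>N. ereal (Y N))"
    using assms(1) by (rule Limsup_ereal_mult_left[OF sequentially_bot])
  finally have "limsup (\<lambda>N. ereal (- e N) + (ereal a * ereal (Y N) + ereal c))
      = ereal a * limsup (\<lambda>N. ereal (Y N)) + ereal c" .
  moreover have "limsup (\<lambda>N. ereal (- e N) + (ereal a * ereal (Y N) + ereal c))
      \<le> limsup (\<lambda>N. ereal (X N))"
    using assms(3) by (intro Limsup_mono) (auto elim!: eventually_mono)
  ultimately show ?thesis by simp
qed

lemma finite_set_density_tendsto_0:
  assumes "finite A"
  shows "(\<lambda>N. real (card (A \<inter> {..N})) / real N) \<longlonglongrightarrow> 0"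
proof (rule tendsto_sandwich)
  show "eventually (\<lambda>N. 0 \<le> real (card (A \<inter> {..N})) / real N) sequentially" by simp
  show "eventually (\<lambda>N. real (card (A \<inter> {..N})) / real N \<le> real (card A) / real N) sequentially"
    using assms by (intro always_eventually allI divide_right_mono) (auto intro: card_mono)
  show "(\<lambda>N. real (card A) / real N) \<longlonglongrightarrow> 0"
    by (rule lim_const_over_n)
qed simp

lemma d_count_density_bound:
  "eventually (\<lambda>N. 5 / 3 * (real (zeros_count N) / real N) + - 2 / 3 - 7 / real N
      \<le> real (d_count N) / real N) sequentially"
  using eventually_gt_at_top[of 0]
proof (rule eventually_mono)
  fix N :: nat assume "N > 0"
  have "5 * real (zeros_count N) \<le> 3 * real (d_count N) + 2 * real N + 21"
    using zeros_count_le_d_count[of N] by (simp flip: of_nat_le_iff)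
  then have "(5 * real (zeros_count N) - 2 * real N - 21) / (3 * real N)
      \<le> 3 * real (d_count N) / (3 * real N)"
    by (intro divide_right_mono) auto
  with \<open>N > 0\<close> show "5 / 3 * (real (zeros_count N) / real N) + - 2 / 3 - 7 / real N
      \<le> real (d_count N) / real N"
    by (simp add: diff_divide_distrib)
qed

lemma d_count_density_tendsto_0:
  assumes "finite {n. undesirable n}"
  shows "(\<lambda>N. real (d_count N) / real N) \<longlonglongrightarrow> 0"
proof -
  have "d_count N = card ({n. undesirable n} \<inter> {..N})" for N
    unfolding d_count_def by (rule arg_cong[where f = card]) (auto simp: undesirable_def)
  then show ?thesis
    using finite_set_density_tendsto_0[OF assms] by simp
qed

theorem theorem3p2:
  shows "liminf (\<lambda>N. ereal (real (d_count N) / real N)) \<ge> (5 * r_inf - 2) / 3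
    \<and> limsup (\<lambda>N. ereal (real (d_count N) / real N)) \<ge> (5 * r_sup - 2) / 3
    \<and> (r_sup > 2 / 5 \<longrightarrow> infinite {n. undesirable n})"
proof -
  have affine: "(5 * r - 2) / 3 = ereal (5 / 3) * r + ereal (- 2 / 3)" for r :: ereal
    by (cases r) auto
  have inf: "liminf (\<lambda>N. ereal (real (d_count N) / real N)) \<ge> (5 * r_inf - 2) / 3"
    unfolding affine r_inf_def
    by (rule liminf_ge_affine[OF _ lim_const_over_n d_count_density_bound]) simp
  have sup: "limsup (\<lambda>N. ereal (real (d_count N) / real N)) \<ge> (5 * r_sup - 2) / 3"
    unfolding affine r_sup_def
    by (rule limsup_ge_affine[OF _ lim_const_over_n d_count_density_bound]) simp
  have "infinite {n. undesirable n}" if r_sup_gt: "r_sup > 2 / 5"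
  proof
    assume "finite {n. undesirable n}"
    then have "limsup (\<lambda>N. ereal (real (d_count N) / real N)) = 0"
      using d_count_density_tendsto_0 by (simp add: lim_imp_Limsup tendsto_ereal zero_ereal_def)
    with sup have "(5 * r_sup - 2) / 3 \<le> 0" by simp
    moreover have "(5 * r - 2) / 3 > 0" if "r > 2 / 5" for r :: ereal
      using that by (cases r) auto
    ultimately show False using r_sup_gt by (simp add: not_le[symmetric])
  qed
  with inf sup show ?thesis by blast
qed

end
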